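(* Let $(G,k,M^*,M)$ be a critical tuple. Then $G_M$ contains no target set, i.e., there is no set $\mathcal{C}$ of directed cycles of $G_M$, each with $w_M(C)\le 0$, such that (a) every $e\in E^+(C^+)$ is contained in some cycle of $\mathcal{C}$; (b) for every $C\in\mathcal{C}$, $C\cap C^+$ is a single path; (c) every $e\in E^-(G_M)$ is contained in at most two cycles of $\mathcal{C}$.
   Context: $R(H)$ is the set of red edges of an edge set $H$. For a perfect matching $M$ of a red/blue edge-colored bipartite graph $G=(A\sqcup B,E)$, $G_M$ is the directed graph on $A\sqcup B$ with edges of $M$ oriented from $A$ to $B$ and other edges from $B$ to $A$, weighted by $w_M(e)=0$ for blue $e$, $-1$ for red $e\in M$, $+1$ for red $e\notin M$; for a subgraph $H$, $E^+(H)$ (resp. $E^-(H)$) is the set of red edges of $H$ not in $M$ (resp. in $M$), and $w_M(H)=|E^+(H)|-|E^-(H)|$. Cycles are identified with edge sets. For an edge $e$, $M^e$ is a perfect matching containing $e$ with the minimum number of red edges among those containing $e$. A tuple $(G,k,M^*,M)$ ($G$ red/blue bipartite, $k\ge0$ integer, $M^*,M$ perfect matchings) is critical if: every edge of $G$ lies in some perfect matching; $|R(M^* )|=k$; $|R(M)|<\frac13k$; every directed cycle $C$ of $G_M$ with $w_M(C)>0$ has $|E^+(C)|>\frac23k$; and $|R(M^e)|<\frac13k$ for every red $e\in M^*\setminus M$. For a critical tuple, $C^+$ denotes the unique directed cycle of $G_M$ contained in $M\Delta M^*$ with $w_M(C^+)>0$. *)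

theory Defs
  imports Complex_Main
begin

text \<open>A red/blue edge-coloured bipartite graph G = (A \<sqcup> B, E): A, B disjoint finite
vertex sets, edges are pairs (a,b) with a in A and b in B; Red is the set of red edges
(all other edges of E are blue).\<close>

definition bip_graph :: "'v set \<Rightarrow> 'v set \<Rightarrow> ('v \<times> 'v) set \<Rightarrow> ('v \<times> 'v) set \<Rightarrow> bool" where
  "bip_graph A B E Red \<longleftrightarrow> finite A \<and> finite B \<and> A \<inter> B = {} \<and> E \<subseteq> A \<times> B \<and> Red \<subseteq> E"

definition perfect_matching :: "'v set \<Rightarrow> 'v set \<Rightarrow> ('v \<times> 'v) set \<Rightarrow> ('v \<times> 'v) set \<Rightarrow> bool" where
  "perfect_matching A B E M \<longleftrightarrow> M \<subseteq> E \<and> (\<forall>a\<in>A. \<exists>!b. (a, b) \<in> M) \<and> (\<forall>b\<in>B. \<exists>!a. (a, b) \<in> M)"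

text \<open>Arcs of the directed graph G_M: edges of M oriented A to B, other edges B to A.\<close>
definition arcM :: "('v \<times> 'v) set \<Rightarrow> ('v \<times> 'v) set \<Rightarrow> 'v \<Rightarrow> 'v \<Rightarrow> bool" where
  "arcM E M u v \<longleftrightarrow> (u, v) \<in> M \<or> ((v, u) \<in> E \<and> (v, u) \<notin> M)"

definition arc_edge :: "('v \<times> 'v) set \<Rightarrow> 'v \<Rightarrow> 'v \<Rightarrow> ('v \<times> 'v)" where
  "arc_edge M u v = (if (u, v) \<in> M then (u, v) else (v, u))"

text \<open>Directed cycles of G_M, identified with their edge sets.\<close>
definition dcycle :: "('v \<times> 'v) set \<Rightarrow> ('v \<times> 'v) set \<Rightarrow> ('v \<times> 'v) set \<Rightarrow> bool" where
  "dcycle E M C \<longleftrightarrow> (\<exists>vs. length vs \<ge> 2 \<and> distinct vs \<and>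
     (\<forall>i < length vs. arcM E M (vs ! i) (vs ! ((i + 1) mod length vs))) \<and>
     C = {arc_edge M (vs ! i) (vs ! ((i + 1) mod length vs)) | i. i < length vs})"

definition dpath :: "('v \<times> 'v) set \<Rightarrow> ('v \<times> 'v) set \<Rightarrow> ('v \<times> 'v) set \<Rightarrow> bool" where
  "dpath E M P \<longleftrightarrow> (\<exists>vs. length vs \<ge> 2 \<and> distinct vs \<and>
     (\<forall>i < length vs - 1. arcM E M (vs ! i) (vs ! Suc i)) \<and>
     P = {arc_edge M (vs ! i) (vs ! Suc i) | i. i < length vs - 1})"

definition Eplus :: "('v \<times> 'v) set \<Rightarrow> ('v \<times> 'v) set \<Rightarrow> ('v \<times> 'v) set \<Rightarrow> ('v \<times> 'v) set" where
  "Eplus Red M H = (H \<inter> Red) - M"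

definition Eminus :: "('v \<times> 'v) set \<Rightarrow> ('v \<times> 'v) set \<Rightarrow> ('v \<times> 'v) set \<Rightarrow> ('v \<times> 'v) set" where
  "Eminus Red M H = H \<inter> Red \<inter> M"

definition wM :: "('v \<times> 'v) set \<Rightarrow> ('v \<times> 'v) set \<Rightarrow> ('v \<times> 'v) set \<Rightarrow> int" where
  "wM Red M H = int (card (Eplus Red M H)) - int (card (Eminus Red M H))"

text \<open>|R(M^e)|: the minimum number of red edges of a perfect matching containing e.\<close>
definition min_red_pm :: "'v set \<Rightarrow> 'v set \<Rightarrow> ('v \<times> 'v) set \<Rightarrow> ('v \<times> 'v) set \<Rightarrow> ('v \<times> 'v) \<Rightarrow> nat" where
  "min_red_pm A B E Red e = (LEAST n. \<exists>M'. perfect_matching A B E M' \<and> e \<in> M' \<and> card (Red \<inter> M') = n)"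

definition critical :: "'v set \<Rightarrow> 'v set \<Rightarrow> ('v \<times> 'v) set \<Rightarrow> ('v \<times> 'v) set \<Rightarrow> nat
    \<Rightarrow> ('v \<times> 'v) set \<Rightarrow> ('v \<times> 'v) set \<Rightarrow> bool" where
  "critical A B E Red k Mstar M \<longleftrightarrow>
     bip_graph A B E Red \<and> perfect_matching A B E Mstar \<and> perfect_matching A B E M \<and>
     (\<forall>e\<in>E. \<exists>M'. perfect_matching A B E M' \<and> e \<in> M') \<and>
     card (Red \<inter> Mstar) = k \<and>
     real (card (Red \<inter> M)) < real k / 3 \<and>
     (\<forall>C. dcycle E M C \<and> wM Red M C > 0 \<longrightarrow> real (card (Eplus Red M C)) > 2 * real k / 3) \<and>
     (\<forall>e \<in> (Red \<inter> Mstar) - M. real (min_red_pm A B E Red e) < real k / 3)"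

text \<open>A target set (relative to the cycle Cp = C^+).\<close>
definition target_set :: "('v \<times> 'v) set \<Rightarrow> ('v \<times> 'v) set \<Rightarrow> ('v \<times> 'v) set \<Rightarrow> ('v \<times> 'v) set
    \<Rightarrow> ('v \<times> 'v) set set \<Rightarrow> bool" where
  "target_set E Red M Cp \<C> \<longleftrightarrow>
     (\<forall>C\<in>\<C>. dcycle E M C \<and> wM Red M C \<le> 0) \<and>
     (\<forall>e\<in>Eplus Red M Cp. \<exists>C\<in>\<C>. e \<in> C) \<and>
     (\<forall>C\<in>\<C>. dpath E M (C \<inter> Cp)) \<and>
     (\<forall>e\<in>Red \<inter> M. card {C\<in>\<C>. e \<in> C} \<le> 2)"

end

theory Submission
  imports Defs
begin

(* The positive red edges of the cycles of a target set cover E^+(C^+).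
   Each of these cycles has nonpositive weight, so its positive red edges are paid for by its
   red edges in M, and every red edge of M is charged at most twice. Hence
   |E^+(C^+)| <= 2 |R(M)| < 2k/3, whereas criticality forces |E^+(C^+)| > 2k/3. *)

lemma card_le_by_bounded_multiplicity_cover:
  assumes "finite F" "finite S"
    and cover: "X \<subseteq> (\<Union>C\<in>F. P C)"
    and fin: "\<And>C. C \<in> F \<Longrightarrow> finite (P C)"
    and paid: "\<And>C. C \<in> F \<Longrightarrow> card (P C) \<le> card (C \<inter> S)"
    and mult: "\<And>e. e \<in> S \<Longrightarrow> card {C \<in> F. e \<in> C} \<le> m"
  shows "card X \<le> m * card S"
proof -
  have "card X \<le> card (\<Union>C\<in>F. P C)"
    using cover fin \<open>finite F\<close> by (intro card_mono) auto
  also have "\<dots> \<le> (\<Sum>C\<in>F. card (P C))"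
    using \<open>finite F\<close> by (rule card_UN_le)
  also have "\<dots> \<le> (\<Sum>C\<in>F. card {e \<in> S. e \<in> C})"
    using paid by (intro sum_mono) (simp add: Int_def conj_commute)
  also have "\<dots> = (\<Sum>e\<in>S. card {C \<in> F. e \<in> C})"
    using assms(1,2) by (rule sum_multicount_gen) simp
  also have "\<dots> \<le> (\<Sum>e\<in>S. m)"
    using mult by (rule sum_mono)
  finally show ?thesis by (simp add: mult.commute)
qed

lemma dcycle_subset_edges:
  assumes "dcycle E M C" "M \<subseteq> E"
  shows "C \<subseteq> E"
proof
  fix x assume "x \<in> C"
  then obtain vs i where "arcM E M (vs ! i) (vs ! ((i + 1) mod length vs))"
    "x = arc_edge M (vs ! i) (vs ! ((i + 1) mod length vs))"
    using assms(1) unfolding dcycle_def by blast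
  then show "x \<in> E"
    using assms(2) unfolding arcM_def arc_edge_def by (auto split: if_splits)
qed

lemma target_set_card_Eplus_le:
  assumes T: "target_set E Red M Cp \<C>" and "finite E" "M \<subseteq> E"
  shows "card (Eplus Red M Cp) \<le> 2 * card (Red \<inter> M)"
proof (rule card_le_by_bounded_multiplicity_cover[where P = "Eplus Red M"])
  have cyc: "\<And>C. C \<in> \<C> \<Longrightarrow> dcycle E M C \<and> wM Red M C \<le> 0"
    using T unfolding target_set_def by blast
  then have "\<C> \<subseteq> Pow E"
    using dcycle_subset_edges \<open>M \<subseteq> E\<close> by blast
  then show "finite \<C>"
    using \<open>finite E\<close> by (meson finite_Pow_iff finite_subset)
  show "finite (Red \<inter> M)"
    using \<open>finite E\<close> \<open>M \<subseteq> E\<close> by (meson finite_Int finite_subset)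
  show "Eplus Red M Cp \<subseteq> (\<Union>C\<in>\<C>. Eplus Red M C)"
    using T unfolding target_set_def Eplus_def by blast
  show "finite (Eplus Red M C)" if "C \<in> \<C>" for C
    using \<open>\<C> \<subseteq> Pow E\<close> \<open>finite E\<close> that unfolding Eplus_def by (auto intro: finite_subset)
  show "card (Eplus Red M C) \<le> card (C \<inter> (Red \<inter> M))" if "C \<in> \<C>" for C
    using cyc[OF that] unfolding wM_def Eminus_def by (simp add: Int_assoc)
  show "card {C \<in> \<C>. e \<in> C} \<le> 2" if "e \<in> Red \<inter> M" for e
    using T that unfolding target_set_def by blast
qed

theorem lemma3:
  fixes A B :: "'v set" and E Red Mstar M Cp :: "('v \<times> 'v) set" and k :: nat
  assumes crit: "critical A B E Red k Mstar M"
    and Cp_cycle: "dcycle E M Cp"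
    and Cp_sub: "Cp \<subseteq> (M - Mstar) \<union> (Mstar - M)"
    and Cp_pos: "wM Red M Cp > 0"
  shows "\<not> (\<exists>\<C>. target_set E Red M Cp \<C>)"
proof
  assume "\<exists>\<C>. target_set E Red M Cp \<C>"
  then obtain \<C> where T: "target_set E Red M Cp \<C>" ..
  have "bip_graph A B E Red" and "perfect_matching A B E M"
    using crit unfolding critical_def by auto
  then have "finite E" and "M \<subseteq> E"
    unfolding bip_graph_def perfect_matching_def by (auto intro: finite_subset)
  with T have "card (Eplus Red M Cp) \<le> 2 * card (Red \<inter> M)"
    by (rule target_set_card_Eplus_le)
  moreover have "real (card (Eplus Red M Cp)) > 2 * real k / 3"
    using crit Cp_cycle Cp_pos unfolding critical_def by blast
  moreover have "real (card (Red \<inter> M)) < real k / 3"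
    using crit unfolding critical_def by blast
  ultimately show False by linarith
qed

end
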